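(* Let $s=(s_1,\ldots,s_n)$ be any sequence of positive integers. Then the $s$-derangement polynomial $d_n^s(z)$ is real-rooted, and hence log-concave and unimodal.
   Context: For a lattice $d$-simplex $\Delta=\mathrm{conv}(v^{(0)},\ldots,v^{(d)})\subset\mathbb{R}^n$, its open parallelepiped is $\Pi^\circ_\Delta=\{\sum_{i=0}^d\lambda_i(v^{(i)},1)\in\mathbb{R}^{n+1}: 0<\lambda_i<1\}$, and its local $h^\ast$-polynomial (box polynomial) is $\ell^\ast(\Delta;z)=\sum_{x\in\Pi^\circ_\Delta\cap\mathbb{Z}^{n+1}}z^{x_{n+1}}$. For a sequence of positive integers $s=(s_1,\ldots,s_n)$, the $s$-lecture hall simplex is $P_n^s=\{x\in\mathbb{R}^n: 0\le x_1/s_1\le x_2/s_2\le\cdots\le x_n/s_n\le 1\}$, and the $s$-derangement polynomial is $d_n^s(z):=\ell^\ast(P_n^s;z)$. A polynomial is real-rooted if all its zeros are real or it is identically zero. *)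

theory Defs
  imports Complex_Main "HOL-Computational_Algebra.Polynomial"
begin

text \<open>Points of R^m are modelled as functions nat => real, coordinates indexed 1..m
  (all other coordinates 0). A lattice d-simplex in R^n is given by its vertices
  v 0, ..., v d (each v i :: nat => real, coordinates 1..n).\<close>

text \<open>Open parallelepiped of the simplex conv(v 0, ..., v d) in R^(n+1):
  points sum_i lambda_i (v i, 1) with 0 < lambda_i < 1.\<close>
definition open_parallelepiped :: "nat \<Rightarrow> nat \<Rightarrow> (nat \<Rightarrow> nat \<Rightarrow> real) \<Rightarrow> (nat \<Rightarrow> real) set" where
  "open_parallelepiped n d v =
     {x. \<exists>l :: nat \<Rightarrow> real. (\<forall>i\<le>d. 0 < l i \<and> l i < 1) \<and>
          x = (\<lambda>j. if 1 \<le> j \<and> j \<le> n then (\<Sum>i\<le>d. l i * v i j)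
                    else if j = n + 1 then (\<Sum>i\<le>d. l i) else 0)}"

definition box_points :: "nat \<Rightarrow> nat \<Rightarrow> (nat \<Rightarrow> nat \<Rightarrow> real) \<Rightarrow> (nat \<Rightarrow> real) set" where
  "box_points n d v = {x \<in> open_parallelepiped n d v. \<forall>j. x j \<in> \<int>}"

definition local_hstar :: "nat \<Rightarrow> nat \<Rightarrow> (nat \<Rightarrow> nat \<Rightarrow> real) \<Rightarrow> int poly" where
  "local_hstar n d v = (\<Sum>x\<in>box_points n d v. monom 1 (nat \<lfloor>x (n + 1)\<rfloor>))"

definition lecture_hall_simplex :: "nat \<Rightarrow> (nat \<Rightarrow> nat) \<Rightarrow> (nat \<Rightarrow> real) set" where
  "lecture_hall_simplex n s =
     {x. (\<forall>j. (j < 1 \<or> n < j) \<longrightarrow> x j = 0) \<and>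
         (n \<ge> 1 \<longrightarrow> 0 \<le> x 1 / s 1 \<and> x n / s n \<le> 1) \<and>
         (\<forall>j. 1 \<le> j \<and> j < n \<longrightarrow> x j / s j \<le> x (j+1) / s (j+1))}"

text \<open>Its vertices: v k (k = 0..n) has coordinates x_j = s_j for j > n - k and 0 otherwise
  (these are the n+1 points where the chain of inequalities becomes 0 = ... = 0 <= 1 = ... = 1).\<close>
definition lecture_hall_vertex :: "nat \<Rightarrow> (nat \<Rightarrow> nat) \<Rightarrow> nat \<Rightarrow> nat \<Rightarrow> real" where
  "lecture_hall_vertex n s k j = (if n - k < j \<and> j \<le> n then real (s j) else 0)"

definition s_derangement_poly :: "nat \<Rightarrow> (nat \<Rightarrow> nat) \<Rightarrow> int poly" where
  "s_derangement_poly n s = local_hstar n n (lecture_hall_vertex n s)"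

definition real_rooted :: "int poly \<Rightarrow> bool" where
  "real_rooted p \<longleftrightarrow> p = 0 \<or> (\<forall>z::complex. poly (map_poly of_int p) z = 0 \<longrightarrow> z \<in> \<real>)"

definition log_concave_poly :: "int poly \<Rightarrow> bool" where
  "log_concave_poly p \<longleftrightarrow> (\<forall>k\<ge>1. coeff p (k - 1) * coeff p (k + 1) \<le> (coeff p k)\<^sup>2)"

definition unimodal_poly :: "int poly \<Rightarrow> bool" where
  "unimodal_poly p \<longleftrightarrow> (\<exists>m. (\<forall>k<m. coeff p k \<le> coeff p (k + 1)) \<and>
                           (\<forall>k\<ge>m. coeff p (k + 1) \<le> coeff p k))"

end

(*
  Writing a point of the open parallelepiped of P_n^s through the partial sums
  c_j = lambda_n + ... + lambda_(n-j+1) of its coefficients, its lattice points correspond to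
  chains 0 = c_0 < c_1 < ... < c_(n+1) with steps less than 1, c_j in (1/s_j)Z for 1 <= j <= n
  and c_(n+1) in Z; d_n^s(z) is the sum of z^(c_(n+1)) over these chains.  Let f_j(mu) be the
  generating polynomial of the chains of length j ending in mu + N, weighted by z^(c_j - mu).
  Then f_(j+1)(mu) is the sum of f_j(nu) over the lattice points nu in the window (mu - 1, mu),
  and f_j(mu - 1) = z f_j(mu).  For Im z > 0 the values f_j(mu), mu < 1, are interlacing:
  whenever mu - 1 <= nu < mu, f_j(nu) is obtained from f_j(mu) by a counterclockwise rotation by
  less than pi.  This property passes from f_j to the window sums f_(j+1) and forces a window
  sum with a nonzero term to be nonzero, so d_n^s = f_(n+1)(0) has no roots off the real line.
  Log-concavity and unimodality then follow because a real-rooted polynomial with nonnegative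
  coefficients is a product of linear factors z + t with t >= 0.
*)
theory Submission
  imports Defs "HOL-Computational_Algebra.Fundamental_Theorem_Algebra"
begin

section \<open>Chains in fractional lattices\<close>

text \<open>For \<open>m = 0\<close> this is all of \<open>\<real>\<close>, hence the positivity hypotheses on the moduli below.\<close>
definition frac_lattice :: "nat \<Rightarrow> real set" where
  "frac_lattice m = {x. x * real m \<in> \<int>}"

lemma frac_lattice_diff_Ints:
  assumes "x \<in> frac_lattice m" "x - y \<in> \<int>"
  shows "y \<in> frac_lattice m"
proof -
  have "y * real m = x * real m - (x - y) * real m" by (simp add: algebra_simps)
  then show ?thesis using assms by (simp add: frac_lattice_def)
qed

lemma frac_lattice_minus_1_iff: "x - 1 \<in> frac_lattice m \<longleftrightarrow> x \<in> frac_lattice m"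
  using frac_lattice_diff_Ints[of x m "x - 1"] frac_lattice_diff_Ints[of "x - 1" m x] by auto

lemma zero_in_frac_lattice [simp]: "0 \<in> frac_lattice m"
  by (simp add: frac_lattice_def)

lemma finite_frac_lattice_interval:
  assumes "0 < m"
  shows "finite (frac_lattice m \<inter> {a<..<b})"
proof -
  have "(\<lambda>x. x * real m) ` (frac_lattice m \<inter> {a<..<b}) \<subseteq> {k \<in> \<int>. a * m \<le> k \<and> k \<le> b * m}"
    using assms by (auto simp: frac_lattice_def)
  then have "finite ((\<lambda>x. x * real m) ` (frac_lattice m \<inter> {a<..<b}))"
    using finite_int_segment finite_subset by blast
  moreover have "inj_on (\<lambda>x. x * real m) (frac_lattice m \<inter> {a<..<b})"
    using assms by (auto intro: inj_onI)
  ultimately show ?thesis by (rule finite_imageD)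
qed

definition unit_step_chains :: "nat \<Rightarrow> (nat \<Rightarrow> real) set" where
  "unit_step_chains j =
     {c. c 0 = 0 \<and> (\<forall>i>j. c i = 0) \<and> (\<forall>i<j. c i < c (Suc i) \<and> c (Suc i) < c i + 1)}"

definition lattice_chains :: "(nat \<Rightarrow> nat) \<Rightarrow> nat \<Rightarrow> (nat \<Rightarrow> real) set" where
  "lattice_chains m j = {c \<in> unit_step_chains j. \<forall>i\<le>j. c i \<in> frac_lattice (m i)}"

lemma unit_step_chains_bounds:
  assumes "c \<in> unit_step_chains j" "i \<le> j"
  shows "0 \<le> c i \<and> c i \<le> real i"
  using assms(2)
proof (induction i)
  case 0
  then show ?case using assms(1) by (simp add: unit_step_chains_def)
next
  case (Suc i)
  then have "c i < c (Suc i)" "c (Suc i) < c i + 1"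
    using assms(1) by (auto simp: unit_step_chains_def)
  then show ?case using Suc by auto
qed

lemma lattice_chains_0: "lattice_chains m 0 = {\<lambda>_. 0}"
  by (auto simp: lattice_chains_def unit_step_chains_def fun_eq_iff) (metis neq0_conv)

lemma lattice_chains_Suc_iff:
  "c \<in> lattice_chains m (Suc j) \<longleftrightarrow>
     c(Suc j := 0) \<in> lattice_chains m j \<and> c (Suc j) \<in> frac_lattice (m (Suc j)) \<and>
     c j < c (Suc j) \<and> c (Suc j) < c j + 1"
  unfolding lattice_chains_def unit_step_chains_def
  by (auto simp: less_Suc_eq le_Suc_eq)

lemma finite_lattice_chains:
  assumes "\<forall>i. 0 < m i"
  shows "finite (lattice_chains m j)"
proof -
  define F where "F = (\<Union>i\<le>j. frac_lattice (m i) \<inter> {-1<..<real j + 1})"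
  have "finite F"
    unfolding F_def using assms by (intro finite_UN_I finite_atMost finite_frac_lattice_interval) auto
  moreover have "lattice_chains m j \<subseteq> {c. \<forall>i. (i \<in> {..j} \<longrightarrow> c i \<in> F) \<and> (i \<notin> {..j} \<longrightarrow> c i = 0)}"
  proof (intro subsetI CollectI allI conjI impI)
    fix c i assume c: "c \<in> lattice_chains m j"
    then have c': "c \<in> unit_step_chains j" by (simp add: lattice_chains_def)
    show "c i = 0" if "i \<notin> {..j}" using that c' by (simp add: unit_step_chains_def)
    show "c i \<in> F" if "i \<in> {..j}"
      using that c unit_step_chains_bounds[OF c', of i] by (fastforce simp: F_def lattice_chains_def)
  qed
  ultimately show ?thesis
    using finite_set_of_finite_funs[of "{..j}" F 0] finite_subset by blast
qed

lemma lattice_chains_last: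
  assumes "c \<in> lattice_chains m j"
  shows "c j \<in> frac_lattice (m j)" and "0 \<le> c j" and "c (Suc j) = 0"
  using assms unit_step_chains_bounds[of c j j]
  by (auto simp: lattice_chains_def unit_step_chains_def)

definition chains_ending_in :: "(nat \<Rightarrow> nat) \<Rightarrow> nat \<Rightarrow> real \<Rightarrow> (nat \<Rightarrow> real) set" where
  "chains_ending_in m j \<mu> = {c \<in> lattice_chains m j. \<mu> \<le> c j \<and> c j - \<mu> \<in> \<int>}"

definition chain_poly :: "(nat \<Rightarrow> nat) \<Rightarrow> nat \<Rightarrow> real \<Rightarrow> int poly" where
  "chain_poly m j \<mu> = (\<Sum>c \<in> chains_ending_in m j \<mu>. monom 1 (nat \<lfloor>c j - \<mu>\<rfloor>))"

lemma chain_poly_0: "chain_poly m 0 \<mu> = (if \<mu> \<in> \<int> \<and> \<mu> \<le> 0 then monom 1 (nat \<lfloor>- \<mu>\<rfloor>) else 0)"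
proof -
  have "chains_ending_in m 0 \<mu> = (if \<mu> \<in> \<int> \<and> \<mu> \<le> 0 then {\<lambda>_. 0} else {})"
    by (auto simp: chains_ending_in_def lattice_chains_0 minus_in_Ints_iff)
  then show ?thesis by (simp add: chain_poly_def)
qed

lemma chains_ending_in_minus_1:
  assumes "\<mu> < 1"
  shows "chains_ending_in m j (\<mu> - 1) = chains_ending_in m j \<mu>"
proof (intro set_eqI iffI)
  fix c assume c: "c \<in> chains_ending_in m j (\<mu> - 1)"
  then have "c j - \<mu> + 1 \<in> \<int>" by (simp add: chains_ending_in_def algebra_simps)
  then have "c j - \<mu> \<in> \<int>" by (metis Ints_1 Ints_diff add_diff_cancel)
  moreover have "-1 < c j - \<mu>"
    using c assms lattice_chains_last(2)[of c m j] by (simp add: chains_ending_in_def)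
  moreover have "0 \<le> x" if "x \<in> \<int>" "-1 < x" for x :: real
    using that by (auto elim!: Ints_cases)
  ultimately have "0 \<le> c j - \<mu>" by blast
  then show "c \<in> chains_ending_in m j \<mu>"
    using c \<open>c j - \<mu> \<in> \<int>\<close> by (simp add: chains_ending_in_def)
next
  fix c assume "c \<in> chains_ending_in m j \<mu>"
  then show "c \<in> chains_ending_in m j (\<mu> - 1)"
    using Ints_add[OF _ Ints_1, of "c j - \<mu>"] by (auto simp: chains_ending_in_def algebra_simps)
qed

lemma chain_poly_shift:
  assumes "\<mu> < 1"
  shows "chain_poly m j (\<mu> - 1) = pCons 0 (chain_poly m j \<mu>)"
proof -
  have "monom 1 (nat \<lfloor>c j - (\<mu> - 1)\<rfloor>) = pCons 0 (monom 1 (nat \<lfloor>c j - \<mu>\<rfloor>))"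
    if "c \<in> chains_ending_in m j \<mu>" for c
  proof -
    have "0 \<le> \<lfloor>c j - \<mu>\<rfloor>" using that by (simp add: chains_ending_in_def)
    moreover have "\<lfloor>c j - (\<mu> - 1)\<rfloor> = \<lfloor>c j - \<mu>\<rfloor> + 1"
      using floor_add_int[of "c j - \<mu>" 1] by (simp add: algebra_simps)
    ultimately have "nat \<lfloor>c j - (\<mu> - 1)\<rfloor> = Suc (nat \<lfloor>c j - \<mu>\<rfloor>)"
      by (simp add: nat_add_distrib)
    then show ?thesis by (simp add: monom_Suc)
  qed
  then have "chain_poly m j (\<mu> - 1) = (\<Sum>c \<in> chains_ending_in m j \<mu>. [:0, 1:] * monom 1 (nat \<lfloor>c j - \<mu>\<rfloor>))"
    unfolding chain_poly_def chains_ending_in_minus_1[OF assms] by (intro sum.cong) simp_all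
  also have "\<dots> = [:0, 1:] * chain_poly m j \<mu>"
    by (simp only: chain_poly_def sum_distrib_left)
  finally show ?thesis by simp
qed

lemma lattice_chains_extend:
  assumes "c \<in> lattice_chains m j" "y \<in> frac_lattice (m (Suc j))" "c j < y" "y < c j + 1"
  shows "c(Suc j := y) \<in> lattice_chains m (Suc j)"
  using assms lattice_chains_last(3)[OF assms(1)] by (simp add: lattice_chains_Suc_iff fun_upd_idem)

lemma chains_ending_in_extend:
  assumes c: "c \<in> chains_ending_in m j \<nu>" and \<mu>: "\<mu> \<in> frac_lattice (m (Suc j))"
    and \<nu>: "\<mu> - 1 < \<nu>" "\<nu> < \<mu>"
  shows "c(Suc j := c j - \<nu> + \<mu>) \<in> chains_ending_in m (Suc j) \<mu>"
proof -
  have c_chain: "c \<in> lattice_chains m j" "\<nu> \<le> c j" "c j - \<nu> \<in> \<int>"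
    using c by (simp_all add: chains_ending_in_def)
  have "c j - \<nu> + \<mu> \<in> frac_lattice (m (Suc j))"
  proof (rule frac_lattice_diff_Ints[OF \<mu>])
    show "\<mu> - (c j - \<nu> + \<mu>) \<in> \<int>"
      using Ints_minus[OF c_chain(3)] by (simp add: algebra_simps)
  qed
  then have "c(Suc j := c j - \<nu> + \<mu>) \<in> lattice_chains m (Suc j)"
    using c_chain(1) \<nu> by (intro lattice_chains_extend) simp_all
  then show ?thesis
    using c_chain unfolding chains_ending_in_def by simp
qed

lemma chains_ending_in_truncate:
  assumes c: "c \<in> chains_ending_in m (Suc j) \<mu>"
  defines "\<nu> \<equiv> c j - (c (Suc j) - \<mu>)"
  shows "\<nu> \<in> frac_lattice (m j) \<inter> {\<mu>-1<..<\<mu>}" and "c(Suc j := 0) \<in> chains_ending_in m j \<nu>"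
proof -
  have c': "c(Suc j := 0) \<in> lattice_chains m j" "c j < c (Suc j)" "c (Suc j) < c j + 1"
    "c (Suc j) - \<mu> \<in> \<int>" "\<mu> \<le> c (Suc j)"
    using c unfolding chains_ending_in_def lattice_chains_Suc_iff by blast+
  have "c j - \<nu> \<in> \<int>" using c'(4) by (simp add: \<nu>_def)
  then have "\<nu> \<in> frac_lattice (m j)"
    using frac_lattice_diff_Ints lattice_chains_last(1)[OF c'(1)] by fastforce
  moreover have "\<mu> - 1 < \<nu>" "\<nu> < \<mu>" "\<nu> \<le> c j"
    using c'(2,3,5) by (simp_all add: \<nu>_def)
  ultimately show "\<nu> \<in> frac_lattice (m j) \<inter> {\<mu>-1<..<\<mu>}" by simp
  show "c(Suc j := 0) \<in> chains_ending_in m j \<nu>"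
    using c'(1) \<open>c j - \<nu> \<in> \<int>\<close> \<open>\<nu> \<le> c j\<close> by (simp add: chains_ending_in_def)
qed

lemma chain_extension_bij:
  assumes "\<mu> \<in> frac_lattice (m (Suc j))"
  shows "bij_betw (\<lambda>(\<nu>, c). c(Suc j := c j - \<nu> + \<mu>))
           (SIGMA \<nu> : frac_lattice (m j) \<inter> {\<mu>-1<..<\<mu>}. chains_ending_in m j \<nu>)
           (chains_ending_in m (Suc j) \<mu>)"
proof (rule bij_betw_byWitness[where f' = "\<lambda>c. (c j - (c (Suc j) - \<mu>), c(Suc j := 0))"])
  show "\<forall>p \<in> SIGMA \<nu> : frac_lattice (m j) \<inter> {\<mu>-1<..<\<mu>}. chains_ending_in m j \<nu>.
          (\<lambda>c. (c j - (c (Suc j) - \<mu>), c(Suc j := 0))) ((\<lambda>(\<nu>, c). c(Suc j := c j - \<nu> + \<mu>)) p) = p"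
  proof
    fix p assume p: "p \<in> (SIGMA \<nu> : frac_lattice (m j) \<inter> {\<mu>-1<..<\<mu>}. chains_ending_in m j \<nu>)"
    obtain \<nu> c where pc: "p = (\<nu>, c)" by fastforce
    with p have "c (Suc j) = 0" using lattice_chains_last(3)[of c m j] by (simp add: chains_ending_in_def)
    then show "(\<lambda>c. (c j - (c (Suc j) - \<mu>), c(Suc j := 0))) ((\<lambda>(\<nu>, c). c(Suc j := c j - \<nu> + \<mu>)) p) = p"
      using pc by (simp add: fun_upd_idem)
  qed
  show "\<forall>c \<in> chains_ending_in m (Suc j) \<mu>.
          (\<lambda>(\<nu>, c). c(Suc j := c j - \<nu> + \<mu>)) ((\<lambda>c. (c j - (c (Suc j) - \<mu>), c(Suc j := 0))) c) = c"
    by auto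
  show "(\<lambda>(\<nu>, c). c(Suc j := c j - \<nu> + \<mu>)) ` (SIGMA \<nu> : frac_lattice (m j) \<inter> {\<mu>-1<..<\<mu>}. chains_ending_in m j \<nu>)
          \<subseteq> chains_ending_in m (Suc j) \<mu>"
    by (auto intro!: chains_ending_in_extend[of _ m j _ \<mu>, OF _ assms])
  show "(\<lambda>c. (c j - (c (Suc j) - \<mu>), c(Suc j := 0))) ` chains_ending_in m (Suc j) \<mu>
          \<subseteq> (SIGMA \<nu> : frac_lattice (m j) \<inter> {\<mu>-1<..<\<mu>}. chains_ending_in m j \<nu>)"
    using chains_ending_in_truncate by blast
qed

lemma chain_poly_Suc:
  assumes "\<forall>i. 0 < m i"
  shows "chain_poly m (Suc j) \<mu> =
           (if \<mu> \<in> frac_lattice (m (Suc j))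
            then \<Sum>\<nu> \<in> frac_lattice (m j) \<inter> {\<mu>-1<..<\<mu>}. chain_poly m j \<nu> else 0)"
proof (cases "\<mu> \<in> frac_lattice (m (Suc j))")
  case True
  define W where "W = frac_lattice (m j) \<inter> {\<mu>-1<..<\<mu>}"
  have fin: "finite W" "\<And>\<nu>. finite (chains_ending_in m j \<nu>)"
    using assms finite_lattice_chains[OF assms, of j]
    by (auto simp: W_def finite_frac_lattice_interval chains_ending_in_def)
  have "chain_poly m (Suc j) \<mu> =
          (\<Sum>(\<nu>, c) \<in> (SIGMA \<nu> : W. chains_ending_in m j \<nu>). monom 1 (nat \<lfloor>c j - \<nu>\<rfloor>))"
    unfolding chain_poly_def W_def
    by (subst sum.reindex_bij_betw[OF chain_extension_bij[of \<mu> m j, OF True], symmetric])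
       (simp add: split_def)
  also have "\<dots> = (\<Sum>\<nu> \<in> W. chain_poly m j \<nu>)"
    using fin by (simp add: chain_poly_def sum.Sigma)
  finally show ?thesis using True by (simp add: W_def)
next
  case False
  have "chains_ending_in m (Suc j) \<mu> = {}"
    using False frac_lattice_diff_Ints lattice_chains_last(1)
    by (fastforce simp: chains_ending_in_def)
  then show ?thesis using False by (simp add: chain_poly_def)
qed

section \<open>Box points of the lecture hall simplex\<close>

definition lecture_hall_moduli :: "nat \<Rightarrow> (nat \<Rightarrow> nat) \<Rightarrow> nat \<Rightarrow> nat" where
  "lecture_hall_moduli n s j = (if 1 \<le> j \<and> j \<le> n then s j else 1)"

text \<open>The point with coefficients \<open>\<lambda>\<close> of the parallelepiped of \<open>P_n^s\<close> has coordinates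
  \<open>s_j c_j\<close> and height \<open>c_(n+1)\<close>, where \<open>c_j = \<lambda>_n + ... + \<lambda>_(n-j+1)\<close>.\<close>
definition lecture_hall_embed :: "nat \<Rightarrow> (nat \<Rightarrow> nat) \<Rightarrow> (nat \<Rightarrow> real) \<Rightarrow> nat \<Rightarrow> real" where
  "lecture_hall_embed n s c j =
     (if 1 \<le> j \<and> j \<le> n then real (s j) * c j else if j = n + 1 then c (n + 1) else 0)"

lemma sum_top_indices:
  assumes "j \<le> Suc n"
  shows "(\<Sum>i \<in> {i. i \<le> n \<and> n < i + j}. f i) = (\<Sum>k<j. f (n - k))"
  by (rule sum.reindex_bij_witness[of _ "\<lambda>k. n - k" "\<lambda>i. n - i"]) (use assms in auto)

lemma lecture_hall_vertex_sum:
  assumes "1 \<le> j" "j \<le> n"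
  shows "(\<Sum>i\<le>n. l i * lecture_hall_vertex n s i j) = real (s j) * (\<Sum>k<j. l (n - k))"
proof -
  have "(\<Sum>i\<le>n. l i * lecture_hall_vertex n s i j) = (\<Sum>i\<le>n. if n < i + j then l i * real (s j) else 0)"
    using assms by (intro sum.cong) (auto simp: lecture_hall_vertex_def)
  also have "\<dots> = (\<Sum>i \<in> {i. i \<le> n \<and> n < i + j}. l i * real (s j))"
    by (simp add: sum.inter_filter[symmetric] Collect_conj_eq Int_commute atMost_def)
  also have "\<dots> = real (s j) * (\<Sum>k<j. l (n - k))"
    using assms by (simp add: sum_top_indices sum_distrib_left mult.commute)
  finally show ?thesis .
qed

lemma open_parallelepiped_lecture_hall:
  "open_parallelepiped n n (lecture_hall_vertex n s) = lecture_hall_embed n s ` unit_step_chains (Suc n)"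
proof (intro equalityI subsetI)
  fix x assume "x \<in> open_parallelepiped n n (lecture_hall_vertex n s)"
  then obtain l where l: "\<forall>i\<le>n. 0 < l i \<and> l i < 1"
    and x: "x = (\<lambda>j. if 1 \<le> j \<and> j \<le> n then \<Sum>i\<le>n. l i * lecture_hall_vertex n s i j
                   else if j = n + 1 then \<Sum>i\<le>n. l i else 0)"
    by (auto simp: open_parallelepiped_def)
  define c where "c i = (if i \<le> Suc n then \<Sum>k<i. l (n - k) else 0)" for i
  have "c \<in> unit_step_chains (Suc n)"
    using l by (auto simp: unit_step_chains_def c_def)
  moreover have "(\<Sum>i\<le>n. l i) = c (Suc n)"
    using sum_top_indices[of "Suc n" n l] by (simp add: c_def atMost_def)
  then have "x = lecture_hall_embed n s c"
    by (auto simp: x lecture_hall_embed_def lecture_hall_vertex_sum c_def)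
  ultimately show "x \<in> lecture_hall_embed n s ` unit_step_chains (Suc n)" by blast
next
  fix x assume "x \<in> lecture_hall_embed n s ` unit_step_chains (Suc n)"
  then obtain c where c: "c \<in> unit_step_chains (Suc n)" and x: "x = lecture_hall_embed n s c"
    by blast
  define l where "l k = c (Suc (n - k)) - c (n - k)" for k
  have l: "\<forall>i\<le>n. 0 < l i \<and> l i < 1"
  proof (intro allI impI)
    fix i assume "i \<le> n"
    then have "c (n - i) < c (Suc (n - i)) \<and> c (Suc (n - i)) < c (n - i) + 1"
      using c unfolding unit_step_chains_def by simp
    then show "0 < l i \<and> l i < 1" by (simp add: l_def)
  qed
  have partial_sums: "(\<Sum>k<j. l (n - k)) = c j" if "j \<le> Suc n" for j
  proof -
    have "(\<Sum>k<j. l (n - k)) = (\<Sum>k<j. c (Suc k) - c k)"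
      using that by (intro sum.cong) (auto simp: l_def Suc_diff_le)
    then show ?thesis using c by (simp add: sum_lessThan_telescope unit_step_chains_def)
  qed
  have "(\<Sum>i\<le>n. l i) = c (Suc n)"
    using sum_top_indices[of "Suc n" n l] partial_sums[of "Suc n"] by (simp add: atMost_def)
  then have "x = (\<lambda>j. if 1 \<le> j \<and> j \<le> n then \<Sum>i\<le>n. l i * lecture_hall_vertex n s i j
                   else if j = n + 1 then \<Sum>i\<le>n. l i else 0)"
    by (auto simp: x lecture_hall_embed_def lecture_hall_vertex_sum partial_sums)
  then show "x \<in> open_parallelepiped n n (lecture_hall_vertex n s)"
    using l by (auto simp: open_parallelepiped_def)
qed

lemma lecture_hall_embed_Ints_iff:
  assumes "c \<in> unit_step_chains (Suc n)"
  shows "(\<forall>j. lecture_hall_embed n s c j \<in> \<int>) \<longleftrightarrow>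
           (\<forall>i\<le>Suc n. c i \<in> frac_lattice (lecture_hall_moduli n s i))"
proof -
  have "lecture_hall_embed n s c j \<in> \<int> \<longleftrightarrow>
          (j \<le> Suc n \<longrightarrow> c j \<in> frac_lattice (lecture_hall_moduli n s j))" for j
    using assms
    by (cases "j = 0")
      (auto simp: lecture_hall_embed_def frac_lattice_def lecture_hall_moduli_def
        unit_step_chains_def mult.commute)
  then show ?thesis by auto
qed

lemma lecture_hall_box_points:
  "box_points n n (lecture_hall_vertex n s) =
     lecture_hall_embed n s ` lattice_chains (lecture_hall_moduli n s) (Suc n)"
  using lecture_hall_embed_Ints_iff
  by (auto simp: box_points_def open_parallelepiped_lecture_hall lattice_chains_def)

lemma inj_on_lecture_hall_embed:
  assumes "\<forall>j. 1 \<le> j \<and> j \<le> n \<longrightarrow> 0 < s j"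
  shows "inj_on (lecture_hall_embed n s) (unit_step_chains (Suc n))"
proof (rule inj_onI)
  fix c d assume cd: "c \<in> unit_step_chains (Suc n)" "d \<in> unit_step_chains (Suc n)"
    and eq: "lecture_hall_embed n s c = lecture_hall_embed n s d"
  show "c = d"
  proof
    fix i
    consider "i = 0 \<or> Suc n < i" | "1 \<le> i \<and> i \<le> n" | "i = Suc n" by linarith
    then show "c i = d i"
    proof cases
      case 1
      then show ?thesis using cd by (auto simp: unit_step_chains_def)
    next
      case 2
      then have "0 < s i" using assms by simp
      then show ?thesis using 2 fun_cong[OF eq, of i] by (simp add: lecture_hall_embed_def)
    next
      case 3
      then show ?thesis using fun_cong[OF eq, of i] by (simp add: lecture_hall_embed_def)
    qed
  qed
qed

lemma s_derangement_poly_eq_chain_poly: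
  assumes "\<forall>j. 1 \<le> j \<and> j \<le> n \<longrightarrow> 0 < s j"
  shows "s_derangement_poly n s = chain_poly (lecture_hall_moduli n s) (Suc n) 0"
proof -
  let ?m = "lecture_hall_moduli n s"
  have "0 \<le> c (Suc n) \<and> c (Suc n) \<in> \<int>" if "c \<in> lattice_chains ?m (Suc n)" for c
    using lattice_chains_last(1,2)[OF that] by (simp add: lecture_hall_moduli_def frac_lattice_def)
  then have "chains_ending_in ?m (Suc n) 0 = lattice_chains ?m (Suc n)"
    by (auto simp: chains_ending_in_def)
  then have "chain_poly ?m (Suc n) 0 = (\<Sum>c \<in> lattice_chains ?m (Suc n). monom 1 (nat \<lfloor>c (Suc n)\<rfloor>))"
    by (simp add: chain_poly_def)
  also have "\<dots> = (\<Sum>x \<in> lecture_hall_embed n s ` lattice_chains ?m (Suc n). monom 1 (nat \<lfloor>x (n + 1)\<rfloor>))"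
    using inj_on_lecture_hall_embed[OF assms]
    by (subst sum.reindex) (auto simp: lecture_hall_embed_def lattice_chains_def inj_on_subset)
  finally show ?thesis
    by (simp add: s_derangement_poly_def local_hstar_def lecture_hall_box_points)
qed

section \<open>Interlacing and real-rootedness\<close>

definition upper_cone :: "complex set" where
  "upper_cone = {w. 0 < Im w \<or> (Im w = 0 \<and> 0 \<le> Re w)}"

lemma zero_in_upper_cone [simp]: "0 \<in> upper_cone"
  by (simp add: upper_cone_def)

lemma upper_cone_add: "v \<in> upper_cone \<Longrightarrow> w \<in> upper_cone \<Longrightarrow> v + w \<in> upper_cone"
  by (auto simp: upper_cone_def)

lemma upper_cone_sum: "(\<And>x. x \<in> A \<Longrightarrow> f x \<in> upper_cone) \<Longrightarrow> sum f A \<in> upper_cone"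
  by (induction A rule: infinite_finite_induct) (auto intro: upper_cone_add)

lemma cnj_mult_self: "cnj a * a = of_real ((cmod a)\<^sup>2)"
  using complex_norm_square[of a] by (simp add: mult.commute)

lemma cnj_mult_self_in_upper_cone: "cnj a * a \<in> upper_cone"
  by (simp add: cnj_mult_self upper_cone_def)

lemma mult_cnj_mult_self_in_upper_cone:
  assumes "0 < Im z"
  shows "z * (cnj a * a) \<in> upper_cone"
  using assms by (cases "a = 0") (simp_all add: cnj_mult_self upper_cone_def)

lemma cnj_mult_self_add_nonzero:
  assumes "a \<noteq> 0" "w \<in> upper_cone"
  shows "cnj a * a + w \<noteq> 0"
proof -
  have "0 < Re (cnj a * a + w) \<or> Im (cnj a * a + w) \<noteq> 0"
    using assms by (auto simp: cnj_mult_self upper_cone_def add_pos_nonneg)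
  then show ?thesis by (metis less_irrefl zero_complex.sel)
qed

text \<open>For nonzero values, \<open>cnj u * v \<in> upper_cone\<close> says that \<open>v\<close> arises from \<open>u\<close> by a
  counterclockwise rotation by an angle in \<open>[0, \<pi>)\<close>; this is the complex form of interlacing
  used to propagate real-rootedness.\<close>
definition interlacing :: "(real \<Rightarrow> complex) \<Rightarrow> bool" where
  "interlacing U \<longleftrightarrow> (\<forall>a c. c < a \<longrightarrow> a < 1 \<longrightarrow> a - 1 \<le> c \<longrightarrow> cnj (U a) * U c \<in> upper_cone)"

lemma interlacing_restrict: "interlacing U \<Longrightarrow> interlacing (\<lambda>x. if x \<in> A then U x else 0)"
  by (auto simp: interlacing_def)

lemma sum_cnj_mult_Times: "(\<Sum>(a, c) \<in> A \<times> B. cnj (U a) * V c) = cnj (sum U A) * sum V B"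
  by (simp add: sum.cartesian_product[symmetric] cnj_sum sum_product)

lemma window_pair_cases:
  fixes a c \<mu> \<nu> :: real
  assumes periodic: "\<And>x. x - 1 \<in> G \<longleftrightarrow> x \<in> G" and \<mu>\<nu>: "\<nu> < \<mu>" "\<mu> - 1 \<le> \<nu>"
    and a: "a \<in> G \<inter> {\<mu>-1<..<\<mu>}" and c: "c \<in> G \<inter> {\<nu>-1<..<\<nu>}"
  obtains "a \<in> G \<inter> {\<nu>-1<..<\<nu>}" "c \<in> G \<inter> {\<mu>-1<..<\<mu>}"
    | "a \<in> G \<inter> {\<nu><..<\<mu>}" "c + 1 \<in> G \<inter> {\<nu><..<\<mu>}"
    | "c < a" "a - 1 \<le> c"
proof -
  consider "a \<le> c" | "c < a - 1" | "c < a" "a - 1 \<le> c" by linarith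
  then show ?thesis
  proof cases
    case 1
    then show ?thesis using a c \<mu>\<nu> that(1) by auto
  next
    case 2
    then show ?thesis using a c \<mu>\<nu> periodic[of "c + 1"] that(2) by auto
  qed (rule that(3))
qed

lemma interlacing_window_sums:
  assumes z: "0 < Im z"
    and periodic: "\<And>x. x - 1 \<in> G \<longleftrightarrow> x \<in> G"
    and fin: "\<And>a b. finite (G \<inter> {a<..<b})"
    and shift: "\<And>b. b < 1 \<Longrightarrow> U (b - 1) = z * U b"
    and U: "interlacing U"
  shows "interlacing (\<lambda>\<mu>. \<Sum>a \<in> G \<inter> {\<mu>-1<..<\<mu>}. U a)"
  unfolding interlacing_def
proof (intro allI impI)
  fix \<mu> \<nu> :: real assume \<mu>\<nu>: "\<nu> < \<mu>" "\<mu> < 1" "\<mu> - 1 \<le> \<nu>"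
  define I where "I = G \<inter> {\<mu>-1<..<\<mu>}"
  define J where "J = G \<inter> {\<nu>-1<..<\<nu>}"
  define T where "T = G \<inter> {\<nu><..<\<mu>}"
  define f where "f = (\<lambda>(a, c). cnj (U a) * U c)"
  \<comment> \<open>The pairs not covered by the interlacing of \<open>U\<close> lie in the blocks \<open>D1\<close> and \<open>D2\<close>,
    whose sums are a squared modulus and \<open>z\<close> times one.\<close>
  define D1 where "D1 = (I \<inter> J) \<times> (I \<inter> J)"
  define D2 where "D2 = (\<lambda>(a, b). (a, b - 1)) ` (T \<times> T)"
  have finite: "finite (I \<times> J)" "finite T"
    using fin by (simp_all add: I_def J_def T_def)
  have D: "D1 \<union> D2 \<subseteq> I \<times> J" "D1 \<inter> D2 = {}"
    using periodic \<mu>\<nu> by (auto simp: D1_def D2_def I_def J_def T_def)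
  have "sum f D1 = cnj (sum U (I \<inter> J)) * sum U (I \<inter> J)"
    by (simp add: D1_def f_def sum_cnj_mult_Times)
  then have D1_cone: "sum f D1 \<in> upper_cone"
    by (simp only: cnj_mult_self_in_upper_cone)
  have "sum f D2 = (\<Sum>(a, b) \<in> T \<times> T. cnj (U a) * U (b - 1))"
    by (simp add: D2_def f_def sum.reindex inj_on_def case_prod_unfold)
  also have "\<dots> = (\<Sum>(a, b) \<in> T \<times> T. z * (cnj (U a) * U b))"
    using \<mu>\<nu> by (intro sum.cong) (auto simp: shift T_def)
  also have "\<dots> = z * (\<Sum>(a, b) \<in> T \<times> T. cnj (U a) * U b)"
    by (simp add: sum_distrib_left case_prod_unfold)
  also have "\<dots> = z * (cnj (sum U T) * sum U T)"
    by (simp only: sum_cnj_mult_Times)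
  finally have D2_cone: "sum f D2 \<in> upper_cone"
    by (simp only: mult_cnj_mult_self_in_upper_cone[OF z])
  have rest_cone: "f p \<in> upper_cone" if p: "p \<in> I \<times> J - (D1 \<union> D2)" for p
  proof -
    obtain a c where ac: "p = (a, c)" "a \<in> I" "c \<in> J" using p by auto
    show ?thesis
    proof (rule window_pair_cases[OF periodic \<mu>\<nu>(1,3), of a c])
      show "a \<in> G \<inter> {\<mu>-1<..<\<mu>}" "c \<in> G \<inter> {\<nu>-1<..<\<nu>}"
        using ac by (simp_all add: I_def J_def)
    next
      assume "a \<in> G \<inter> {\<nu>-1<..<\<nu>}" "c \<in> G \<inter> {\<mu>-1<..<\<mu>}"
      then have "p \<in> D1" using ac by (simp add: D1_def I_def J_def)
      then show ?thesis using p by simp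
    next
      assume "a \<in> G \<inter> {\<nu><..<\<mu>}" "c + 1 \<in> G \<inter> {\<nu><..<\<mu>}"
      then have "p \<in> D2" unfolding D2_def T_def using ac(1) by force
      then show ?thesis using p by simp
    next
      assume "c < a" "a - 1 \<le> c"
      moreover have "a < 1" using ac \<mu>\<nu> by (simp add: I_def)
      ultimately show ?thesis using U ac(1) by (simp add: interlacing_def f_def)
    qed
  qed
  have "cnj (sum U I) * sum U J = sum f (I \<times> J)"
    by (simp add: f_def sum_cnj_mult_Times)
  also have "\<dots> = sum f (I \<times> J - (D1 \<union> D2)) + sum f (D1 \<union> D2)"
    by (rule sum.subset_diff[OF D(1) finite(1)])
  also have "\<dots> = sum f (I \<times> J - (D1 \<union> D2)) + (sum f D1 + sum f D2)"
    using finite_subset[OF D(1) finite(1)] D(2) by (simp add: sum.union_disjoint)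
  also have "\<dots> \<in> upper_cone"
    by (intro upper_cone_add upper_cone_sum[of "I \<times> J - (D1 \<union> D2)"] D1_cone D2_cone rest_cone)
  finally have "cnj (sum U I) * sum U J \<in> upper_cone" .
  then show "cnj (\<Sum>a \<in> G \<inter> {\<mu>-1<..<\<mu>}. U a) * (\<Sum>a \<in> G \<inter> {\<nu>-1<..<\<nu>}. U a) \<in> upper_cone"
    by (simp add: I_def J_def)
qed

lemma interlacing_sum_nonzero:
  assumes U: "interlacing U" and W: "finite W" "W \<subseteq> {\<mu>-1<..<\<mu>}" "\<mu> \<le> 1"
    and a0: "a0 \<in> W" "U a0 \<noteq> 0"
  shows "sum U W \<noteq> 0"
proof -
  define A where "A = {a \<in> W. U a \<noteq> 0}"
  define m where "m = Max A"
  have A: "finite A" "a0 \<in> A" using W a0 by (simp_all add: A_def)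
  then have "m \<in> A" unfolding m_def by (intro Max_in) auto
  then have m: "m \<in> W" "U m \<noteq> 0" by (simp_all add: A_def)
  \<comment> \<open>The nonzero term with the largest index is rotated clockwise from all the others.\<close>
  have "cnj (U m) * U a \<in> upper_cone" if a: "a \<in> W - {m}" for a
  proof (cases "U a = 0")
    case False
    then have "a \<le> m" using a A(1) by (simp add: m_def A_def)
    moreover have "\<mu> - 1 < a" "a < \<mu>" "\<mu> - 1 < m" "m < \<mu>" using a m(1) W by auto
    ultimately have "a < m" "m < 1" "m - 1 \<le> a" using a W(3) by auto
    then show ?thesis using U by (simp add: interlacing_def)
  qed simp
  then have "cnj (U m) * U m + (\<Sum>a \<in> W - {m}. cnj (U m) * U a) \<noteq> 0"
    by (intro cnj_mult_self_add_nonzero m(2) upper_cone_sum)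
  moreover have "cnj (U m) * sum U W = cnj (U m) * U m + (\<Sum>a \<in> W - {m}. cnj (U m) * U a)"
    using W m(1) by (simp add: sum.remove sum_distrib_left distrib_left)
  ultimately show ?thesis by auto
qed

lemma poly_map_of_int_sum:
  fixes z :: "'a::comm_ring_1"
  shows "poly (map_poly of_int (sum f A)) z = (\<Sum>x\<in>A. poly (map_poly of_int (f x)) z)"
proof -
  have "map_poly of_int (sum f A) = (\<Sum>x\<in>A. map_poly of_int (f x) :: 'a poly)"
    by (rule poly_eqI) (simp add: coeff_map_poly coeff_sum)
  then show ?thesis by (simp add: poly_sum)
qed

definition chain_value :: "(nat \<Rightarrow> nat) \<Rightarrow> nat \<Rightarrow> complex \<Rightarrow> real \<Rightarrow> complex" where
  "chain_value m j z \<mu> = poly (map_poly of_int (chain_poly m j \<mu>)) z"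

lemma chain_value_shift: "\<mu> < 1 \<Longrightarrow> chain_value m j z (\<mu> - 1) = z * chain_value m j z \<mu>"
  by (simp add: chain_value_def chain_poly_shift map_poly_pCons)

lemma chain_value_Suc:
  assumes "\<forall>i. 0 < m i"
  shows "chain_value m (Suc j) z =
           (\<lambda>\<mu>. if \<mu> \<in> frac_lattice (m (Suc j))
                then \<Sum>\<nu> \<in> frac_lattice (m j) \<inter> {\<mu>-1<..<\<mu>}. chain_value m j z \<nu> else 0)"
  by (simp add: fun_eq_iff chain_value_def chain_poly_Suc[OF assms] poly_map_of_int_sum)

lemma interlacing_chain_value:
  assumes m: "\<forall>i. 0 < m i" and z: "0 < Im z"
  shows "interlacing (chain_value m j z)"
proof (induction j)
  case 0
  show ?case
    unfolding interlacing_def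
  proof (intro allI impI)
    fix \<mu> \<nu> :: real assume \<mu>\<nu>: "\<nu> < \<mu>" "\<mu> < 1" "\<mu> - 1 \<le> \<nu>"
    show "cnj (chain_value m 0 z \<mu>) * chain_value m 0 z \<nu> \<in> upper_cone"
    proof (cases "\<mu> \<in> \<int> \<and> \<nu> \<in> \<int>")
      case True
      then have "\<nu> = \<mu> - 1" using \<mu>\<nu> by (auto elim!: Ints_cases)
      then show ?thesis
        using mult_cnj_mult_self_in_upper_cone[OF z, of "chain_value m 0 z \<mu>"] \<mu>\<nu>(2)
        by (simp add: chain_value_shift ac_simps)
    next
      case False
      then show ?thesis by (auto simp: chain_value_def chain_poly_0)
    qed
  qed
next
  case (Suc j)
  have "interlacing (\<lambda>\<mu>. \<Sum>\<nu> \<in> frac_lattice (m j) \<inter> {\<mu>-1<..<\<mu>}. chain_value m j z \<nu>)"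
    using m by (intro interlacing_window_sums[OF z _ _ _ Suc.IH])
      (simp_all add: frac_lattice_minus_1_iff finite_frac_lattice_interval chain_value_shift)
  then show ?case
    unfolding chain_value_Suc[OF m] by (rule interlacing_restrict)
qed

lemma chain_value_nonzero:
  assumes m: "\<forall>i. 0 < m i" and z: "0 < Im z"
  shows "\<mu> < 1 \<Longrightarrow> chain_poly m j \<mu> \<noteq> 0 \<Longrightarrow> chain_value m j z \<mu> \<noteq> 0"
proof (induction j arbitrary: \<mu>)
  case 0
  then show ?case
    using z by (auto simp: chain_value_def chain_poly_0 map_poly_monom poly_monom split: if_splits)
next
  case (Suc j)
  define W where "W = frac_lattice (m j) \<inter> {\<mu>-1<..<\<mu>}"
  have \<mu>: "\<mu> \<in> frac_lattice (m (Suc j))" "(\<Sum>\<nu> \<in> W. chain_poly m j \<nu>) \<noteq> 0"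
    using Suc.prems(2) by (simp_all add: chain_poly_Suc[OF m] W_def split: if_splits)
  then obtain \<nu> where \<nu>: "\<nu> \<in> W" "chain_poly m j \<nu> \<noteq> 0"
    by (meson sum.neutral)
  then have "chain_value m j z \<nu> \<noteq> 0"
    using Suc.IH Suc.prems(1) by (simp add: W_def)
  then have "(\<Sum>\<nu> \<in> W. chain_value m j z \<nu>) \<noteq> 0"
    using \<nu>(1) Suc.prems(1) m
    by (intro interlacing_sum_nonzero[OF interlacing_chain_value[OF m z]])
       (auto simp: W_def finite_frac_lattice_interval)
  then show ?case using \<mu>(1) by (simp add: chain_value_Suc[OF m] W_def)
qed

lemma chain_poly_real_rooted:
  assumes m: "\<forall>i. 0 < m i" and \<mu>: "\<mu> < 1"
  shows "real_rooted (chain_poly m j \<mu>)"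
proof -
  let ?p = "map_poly (of_int :: int \<Rightarrow> complex) (chain_poly m j \<mu>)"
  have no_upper_root: "poly ?p z \<noteq> 0" if "0 < Im z" "chain_poly m j \<mu> \<noteq> 0" for z
    using chain_value_nonzero[OF m that(1) \<mu> that(2)] by (simp add: chain_value_def)
  have "z \<in> \<real>" if "chain_poly m j \<mu> \<noteq> 0" "poly ?p z = 0" for z
  proof (rule ccontr)
    assume "z \<notin> \<real>"
    then consider "0 < Im z" | "0 < Im (cnj z)"
      by (metis complex_is_Real_iff cnj.sel(2) neg_0_less_iff_less linorder_neqE_linordered_idom)
    then show False
    proof cases
      case 1
      then show False using no_upper_root that by blast
    next
      case 2
      have "poly ?p (cnj z) = 0"
        using that(2) real_poly_cnj_root_iff[of ?p z] by (simp add: coeff_map_poly)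
      then show False using no_upper_root 2 that(1) by blast
    qed
  qed
  then show ?thesis by (auto simp: real_rooted_def)
qed

section \<open>Log-concavity and unimodality from real roots\<close>

definition log_concave_seq :: "(nat \<Rightarrow> real) \<Rightarrow> bool" where
  "log_concave_seq a \<longleftrightarrow> (\<forall>k\<ge>1. a (k - 1) * a (k + 1) \<le> (a k)\<^sup>2)"

definition no_internal_zeros :: "(nat \<Rightarrow> real) \<Rightarrow> bool" where
  "no_internal_zeros a \<longleftrightarrow> (\<forall>i j k. i < j \<longrightarrow> j < k \<longrightarrow> 0 < a i \<longrightarrow> 0 < a k \<longrightarrow> 0 < a j)"

lemma log_concave_seq_Suc:
  assumes "log_concave_seq a"
  shows "a m * a (Suc (Suc m)) \<le> (a (Suc m))\<^sup>2"
  using assms[unfolded log_concave_seq_def, rule_format, of "Suc m"] by simp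

lemma coeff_linear_factor_mult:
  fixes q :: "'a::comm_ring_1 poly"
  shows "coeff ([:t, 1:] * q) k = (if k = 0 then t * coeff q 0 else coeff q (k - 1) + t * coeff q k)"
  by (cases k) (simp_all add: coeff_pCons)

text \<open>Here \<open>x, y, w, v\<close> are consecutive terms of a nonnegative log-concave sequence without
  internal zeros; the claim follows by multiplying the two log-concavity inequalities.\<close>
lemma log_concave_outer_le_inner:
  fixes x y w v :: real
  assumes "0 \<le> x" "0 \<le> y" "0 \<le> w" "0 \<le> v" "x * w \<le> y\<^sup>2" "y * v \<le> w\<^sup>2"
    and "0 < x \<Longrightarrow> 0 < v \<Longrightarrow> 0 < y \<and> 0 < w"
  shows "x * v \<le> y * w"
proof (cases "0 < x \<and> 0 < v")
  case True
  then have yw: "0 < y" "0 < w" using assms by auto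
  have "(x * w) * (y * v) \<le> y\<^sup>2 * w\<^sup>2"
    by (rule mult_mono) (use assms in auto)
  then have "(x * v) * (y * w) \<le> (y * w) * (y * w)" by (simp add: power2_eq_square ac_simps)
  then show ?thesis using yw by (simp add: mult_le_cancel_right_pos)
next
  case False
  then show ?thesis using assms by (auto simp: not_less)
qed

lemma linear_factor_log_concave_ineq:
  fixes x y w v t :: real
  assumes "0 \<le> t" "x * w \<le> y\<^sup>2" "y * v \<le> w\<^sup>2" "x * v \<le> y * w"
  shows "(x + t * y) * (w + t * v) \<le> (y + t * w)\<^sup>2"
proof -
  have "t * (x * v) \<le> t * (y * w)" "t\<^sup>2 * (y * v) \<le> t\<^sup>2 * w\<^sup>2"
    using assms by (simp_all add: mult_left_mono)
  then show ?thesis using assms(2) by (simp add: algebra_simps power2_eq_square)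
qed

lemma log_concave_linear_factor:
  fixes q :: "real poly"
  assumes nonneg: "\<forall>k. 0 \<le> coeff q k" and lc: "log_concave_seq (coeff q)"
    and nz: "no_internal_zeros (coeff q)" and t: "0 \<le> t"
  shows "log_concave_seq (coeff ([:t, 1:] * q))"
  unfolding log_concave_seq_def
proof (intro allI impI)
  fix k :: nat assume "1 \<le> k"
  then obtain m where k: "k = Suc m" by (cases k) auto
  define a where "a = coeff q"
  note lcS = log_concave_seq_Suc[OF lc, folded a_def]
  show "coeff ([:t, 1:] * q) (k - 1) * coeff ([:t, 1:] * q) (k + 1) \<le> (coeff ([:t, 1:] * q) k)\<^sup>2"
  proof (cases m)
    case 0
    have "(0 + t * a 0) * (a 1 + t * a 2) \<le> (a 0 + t * a 1)\<^sup>2"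
      using lcS[of 0] nonneg
      by (intro linear_factor_log_concave_ineq[OF t]) (simp_all add: a_def numeral_2_eq_2)
    then show ?thesis
      unfolding coeff_linear_factor_mult a_def[symmetric] by (simp add: k 0 numeral_2_eq_2)
  next
    case (Suc m')
    have "a m' * a (m' + 3) \<le> a (Suc m') * a (m' + 2)"
    proof (rule log_concave_outer_le_inner)
      show "a m' * a (m' + 2) \<le> (a (Suc m'))\<^sup>2" "a (Suc m') * a (m' + 3) \<le> (a (m' + 2))\<^sup>2"
        using lcS[of m'] lcS[of "Suc m'"] by (simp_all add: numeral_2_eq_2 numeral_3_eq_3)
      show "0 < a (Suc m') \<and> 0 < a (m' + 2)" if "0 < a m'" "0 < a (m' + 3)"
      proof -
        have "\<forall>j. m' < j \<longrightarrow> j < m' + 3 \<longrightarrow> 0 < a j"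
          using nz that unfolding no_internal_zeros_def a_def by blast
        then show ?thesis by simp
      qed
    qed (use nonneg in \<open>simp_all add: a_def\<close>)
    then have "(a m' + t * a (Suc m')) * (a (m' + 2) + t * a (m' + 3)) \<le> (a (Suc m') + t * a (m' + 2))\<^sup>2"
      using lcS[of m'] lcS[of "Suc m'"]
      by (intro linear_factor_log_concave_ineq[OF t]) (simp_all add: numeral_2_eq_2 numeral_3_eq_3)
    then show ?thesis
      unfolding coeff_linear_factor_mult a_def[symmetric] by (simp add: k Suc numeral_2_eq_2 numeral_3_eq_3)
  qed
qed

lemma no_internal_zeros_linear_factor:
  fixes q :: "real poly"
  assumes nonneg: "\<forall>k. 0 \<le> coeff q k" and nz: "no_internal_zeros (coeff q)" and t: "0 \<le> t"
  shows "no_internal_zeros (coeff ([:t, 1:] * q))"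
  unfolding no_internal_zeros_def
proof (intro allI impI)
  fix i j k assume ij: "i < j" and jk: "j < k"
    and pos_i: "0 < coeff ([:t, 1:] * q) i" and pos_k: "0 < coeff ([:t, 1:] * q) k"
  have support: "0 < coeff q l \<or> (0 < l \<and> 0 < coeff q (l - 1))"
    if "0 < coeff ([:t, 1:] * q) l" for l
  proof (rule ccontr)
    assume "\<not> ?thesis"
    then have "coeff q l = 0" "0 < l \<longrightarrow> coeff q (l - 1) = 0"
      using nonneg by (auto simp: order_le_less)
    then show False using that unfolding coeff_linear_factor_mult by (auto split: if_splits)
  qed
  have "i \<le> j - 1" "i - 1 \<le> j - 1" "j - 1 < k" "j - 1 < k - 1" using ij jk by auto
  then obtain i' k' where i': "i' \<le> j - 1" "0 < coeff q i'" and k': "j - 1 < k'" "0 < coeff q k'"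
    using support[OF pos_i] support[OF pos_k] by blast
  have "0 < coeff q (j - 1)"
  proof (cases "i' = j - 1")
    case False
    then show ?thesis using nz i' k' unfolding no_internal_zeros_def by (meson le_neq_implies_less)
  qed (use i' in simp)
  then show "0 < coeff ([:t, 1:] * q) j"
    unfolding coeff_linear_factor_mult using ij nonneg t by (simp add: add_pos_nonneg)
qed

lemma poly_map_of_real_of_real:
  "poly (map_poly of_real p) (of_real x :: 'a::{comm_ring_1,real_algebra_1}) = of_real (poly p x)"
  by (induction p) (auto simp: map_poly_pCons)

lemma map_poly_of_real_mult:
  "map_poly (of_real :: real \<Rightarrow> 'a::{comm_ring_1,real_algebra_1}) (p * q) = map_poly of_real p * map_poly of_real q"
  by (rule poly_eqI) (simp add: coeff_map_poly coeff_mult)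

lemma nonpos_real_root_factor:
  fixes q :: "real poly"
  assumes "0 < degree q"
    and "\<forall>z. poly (map_poly of_real q) z = (0::complex) \<longrightarrow> z \<in> \<real> \<and> Re z \<le> 0"
  obtains t q' where "0 \<le> t" "q = [:t, 1:] * q'"
proof -
  have "degree (map_poly (of_real :: real \<Rightarrow> complex) q) \<noteq> 0"
    using assms(1) by (simp add: degree_map_poly)
  then obtain z :: complex where z: "poly (map_poly of_real q) z = 0"
    using fundamental_theorem_of_algebra constant_degree by metis
  then have "z \<in> \<real>" "Re z \<le> 0" using assms(2) by auto
  then obtain t where t: "z = of_real (- t)" "0 \<le> t"
    by (metis Reals_cases complex_of_real_def neg_0_le_iff_le minus_minus Re_complex_of_real)
  have "of_real (poly q (- t)) = poly (map_poly of_real q) (of_real (- t) :: complex)"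
    by (rule poly_map_of_real_of_real[symmetric])
  then have "poly q (- t) = 0"
    using z t(1) by simp
  then obtain q' where "q = [:t, 1:] * q'"
    by (metis dvdE minus_minus poly_eq_0_iff_dvd)
  then show ?thesis using t(2) that by blast
qed

lemma nonpos_real_rooted_coeffs:
  fixes q :: "real poly"
  assumes "0 < lead_coeff q"
    and "\<forall>z. poly (map_poly of_real q) z = (0::complex) \<longrightarrow> z \<in> \<real> \<and> Re z \<le> 0"
  shows "(\<forall>k. 0 \<le> coeff q k) \<and> log_concave_seq (coeff q) \<and> no_internal_zeros (coeff q)"
  using assms
proof (induction "degree q" arbitrary: q)
  case 0
  then have zero: "coeff q k = 0" if "0 < k" for k using that by (simp add: coeff_eq_0)
  moreover have "0 < coeff q 0" using 0 by simp
  ultimately have "\<forall>k. 0 \<le> coeff q k" by (metis less_eq_real_def neq0_conv)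
  moreover have "log_concave_seq (coeff q)" using zero by (simp add: log_concave_seq_def)
  moreover have "no_internal_zeros (coeff q)"
    unfolding no_internal_zeros_def using zero by (metis less_irrefl not_less_zero neq0_conv)
  ultimately show ?case by blast
next
  case (Suc d)
  obtain t q' where t: "0 \<le> t" and q: "q = [:t, 1:] * q'"
    using nonpos_real_root_factor[of q] Suc.hyps(2) Suc.prems(2) by (metis zero_less_Suc)
  have "q' \<noteq> 0" using Suc.prems(1) q by auto
  then have "degree q = Suc (degree q')"
    unfolding q by (subst degree_mult_eq) simp_all
  moreover have "lead_coeff q = lead_coeff q'"
    unfolding q by (subst lead_coeff_mult) simp
  ultimately have "degree q' = d" "0 < lead_coeff q'"
    using Suc.hyps(2) Suc.prems(1) by simp_all
  moreover have "\<forall>w. poly (map_poly of_real q') w = (0::complex) \<longrightarrow> w \<in> \<real> \<and> Re w \<le> 0"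
    using Suc.prems(2) unfolding q map_poly_of_real_mult poly_mult by auto
  ultimately have IH: "\<forall>k. 0 \<le> coeff q' k" "log_concave_seq (coeff q')" "no_internal_zeros (coeff q')"
    using Suc.hyps(1) by blast+
  have "\<forall>k. 0 \<le> coeff q k"
    unfolding q coeff_linear_factor_mult using IH(1) t by simp
  then show ?case
    using log_concave_linear_factor[OF IH t] no_internal_zeros_linear_factor[OF IH(1,3) t]
    unfolding q by blast
qed

lemma log_concave_nonincreasing_from:
  fixes a :: "nat \<Rightarrow> real"
  assumes nonneg: "\<forall>k. 0 \<le> a k" and lc: "log_concave_seq a" and nz: "no_internal_zeros a"
    and descent: "a (Suc k) < a k" and "k \<le> i"
  shows "a (Suc i) \<le> a i"
proof -
  have "a (Suc i) < a i \<or> a (Suc i) = 0"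
    using \<open>k \<le> i\<close>
  proof (induction i rule: dec_induct)
    case base
    then show ?case using descent by simp
  next
    case (step i)
    show ?case
    proof (cases "a (Suc i) = 0")
      case True
      have "0 < a k" using nonneg descent by (meson le_less_trans)
      then have "\<not> 0 < a (Suc (Suc i))"
        using nz[unfolded no_internal_zeros_def, rule_format, of k "Suc i" "Suc (Suc i)"] True step(1)
        by auto
      then show ?thesis using nonneg[rule_format, of "Suc (Suc i)"] by simp
    next
      case False
      then have pos: "0 < a (Suc i)" and lt: "a (Suc i) < a i"
        using nonneg[rule_format, of "Suc i"] step(3) by auto
      have "a i * a (Suc (Suc i)) \<le> (a (Suc i))\<^sup>2"
        by (rule log_concave_seq_Suc[OF lc])
      also have "\<dots> < a i * a (Suc i)" using pos lt by (simp add: power2_eq_square)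
      finally show ?thesis using pos lt by simp
    qed
  qed
  then show ?thesis using nonneg by auto
qed

lemma log_concave_unimodal:
  fixes a :: "nat \<Rightarrow> real"
  assumes nonneg: "\<forall>k. 0 \<le> a k" and lc: "log_concave_seq a" and nz: "no_internal_zeros a"
    and finite_support: "\<forall>k>N. a k = 0"
  shows "\<exists>m. (\<forall>k<m. a k \<le> a (k + 1)) \<and> (\<forall>k\<ge>m. a (k + 1) \<le> a k)"
proof (cases "\<exists>k. a (Suc k) < a k")
  case True
  define m where "m = (LEAST k. a (Suc k) < a k)"
  have "a (Suc m) < a m" unfolding m_def using True by (rule LeastI_ex)
  then have "\<forall>k\<ge>m. a (k + 1) \<le> a k"
    using log_concave_nonincreasing_from[OF nonneg lc nz] by simp
  moreover have "\<forall>k<m. a k \<le> a (k + 1)"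
    using not_less_Least[of _ "\<lambda>k. a (Suc k) < a k"] by (auto simp: m_def not_less)
  ultimately show ?thesis by blast
next
  case False
  then have mono: "a k \<le> a (Suc k)" for k by (simp add: not_less)
  have "a (k + 1) \<le> a k" for k
  proof -
    have "a (k + 1) \<le> a (Suc (max (k + 1) N))" by (rule lift_Suc_mono_le[of a, OF mono]) simp
    also have "\<dots> = 0" using finite_support by simp
    also have "\<dots> \<le> a k" using nonneg by simp
    finally show ?thesis .
  qed
  then show ?thesis by (intro exI[of _ 0]) simp
qed

lemma poly_pos_if_nonneg_coeffs:
  fixes q :: "real poly"
  assumes "\<forall>k. 0 \<le> coeff q k" "0 < lead_coeff q" "0 < x"
  shows "0 < poly q x"
proof -
  have "0 < coeff q (degree q) * x ^ degree q"
    using assms(2,3) by simp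
  also have "\<dots> \<le> (\<Sum>i\<le>degree q. coeff q i * x ^ i)"
    by (rule member_le_sum) (use assms(1,3) in auto)
  finally show ?thesis by (simp add: poly_altdef)
qed

lemma real_rooted_log_concave_unimodal:
  fixes p :: "int poly"
  assumes real_rooted: "real_rooted p" and nonneg: "\<forall>k. 0 \<le> coeff p k"
  shows "log_concave_poly p \<and> unimodal_poly p"
proof (cases "p = 0")
  case True
  then show ?thesis by (simp add: log_concave_poly_def unimodal_poly_def)
next
  case False
  define q where "q = map_poly real_of_int p"
  have coeff_q: "coeff q k = real_of_int (coeff p k)" for k
    by (simp add: q_def coeff_map_poly)
  have "0 < lead_coeff q"
    using False nonneg[rule_format, of "degree p"]
    by (simp add: q_def degree_map_poly coeff_map_poly order_le_less)
  moreover have "z \<in> \<real> \<and> Re z \<le> 0" if "poly (map_poly of_real q) z = (0::complex)" for z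
  proof -
    have "map_poly (of_real :: real \<Rightarrow> complex) q = map_poly of_int p"
      by (rule poly_eqI) (simp add: q_def coeff_map_poly)
    then have "z \<in> \<real>" using real_rooted False that by (simp add: real_rooted_def)
    then obtain x where x: "z = of_real x" by (auto elim: Reals_cases)
    have "poly q x = 0"
      using that poly_map_of_real_of_real[of q x, where 'a = complex] by (simp add: x)
    moreover have "0 < poly q x" if "0 < x"
      using nonneg \<open>0 < lead_coeff q\<close> that by (intro poly_pos_if_nonneg_coeffs) (simp_all add: coeff_q)
    ultimately show ?thesis using x by force
  qed
  ultimately have q: "\<forall>k. 0 \<le> coeff q k" "log_concave_seq (coeff q)" "no_internal_zeros (coeff q)"
    using nonpos_real_rooted_coeffs by blast+
  have "log_concave_poly p"
    unfolding log_concave_poly_def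
  proof (intro allI impI)
    fix k :: nat assume "1 \<le> k"
    then have "real_of_int (coeff p (k - 1) * coeff p (k + 1)) \<le> real_of_int ((coeff p k)\<^sup>2)"
      using q(2) by (simp add: log_concave_seq_def coeff_q)
    then show "coeff p (k - 1) * coeff p (k + 1) \<le> (coeff p k)\<^sup>2" by (simp only: of_int_le_iff)
  qed
  moreover obtain m where "\<forall>k<m. coeff q k \<le> coeff q (k + 1)" "\<forall>k\<ge>m. coeff q (k + 1) \<le> coeff q k"
    using log_concave_unimodal[OF q, of "degree q"] by (auto simp: coeff_eq_0)
  then have "unimodal_poly p"
    unfolding unimodal_poly_def by (intro exI[of _ m]) (simp add: coeff_q)
  ultimately show ?thesis by blast
qed

theorem theorem3p6:
  fixes n :: nat and s :: "nat \<Rightarrow> nat"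
  assumes "\<forall>j. 1 \<le> j \<and> j \<le> n \<longrightarrow> 0 < s j"
  shows "real_rooted (s_derangement_poly n s) \<and> log_concave_poly (s_derangement_poly n s)
         \<and> unimodal_poly (s_derangement_poly n s)"
proof -
  have "\<forall>i. 0 < lecture_hall_moduli n s i"
    using assms by (simp add: lecture_hall_moduli_def)
  then have "real_rooted (s_derangement_poly n s)"
    unfolding s_derangement_poly_eq_chain_poly[OF assms] by (rule chain_poly_real_rooted) simp
  moreover have "\<forall>k. 0 \<le> coeff (s_derangement_poly n s) k"
    by (simp add: s_derangement_poly_def local_hstar_def coeff_sum coeff_monom sum_nonneg)
  ultimately show ?thesis using real_rooted_log_concave_unimodal by blast
qed

end
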